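(* Let $\theta$ be a comtrace alphabet. The map $\mathsf{dep2lct}:\mathsf{CDG}(\theta)\to\mathsf{LCT}(\theta)$, $D\mapsto D^\lozenge$, is injective: if $D_1,D_2\in\mathsf{CDG}(\theta)$ and $D_1^\lozenge=D_2^\lozenge$, then $D_1=D_2$.
   Context: Labeled relational structures $(X,P,Q,\lambda)$ are considered up to label-preserving isomorphism (bijections preserving/reflecting $P$ and $Q$ and preserving labels). $\lozenge$-closure: $(X,R_1,R_2)^\lozenge:=(X,(R_1\cup R_2)^*\circ R_1\circ(R_1\cup R_2)^*,(R_1\cup R_2)^*\setminus\mathrm{id}_X)$ ($^*$ = reflexive transitive closure), with labels unchanged. So-structures: $(X,\prec,\sqsubset)$ with (S1) $\neg(\alpha\sqsubset\alpha)$; (S2) $\alpha\prec\beta\Rightarrow\alpha\sqsubset\beta$; (S3) $\alpha\sqsubset\beta\sqsubset\gamma\wedge\alpha\neq\gamma\Rightarrow\alpha\sqsubset\gamma$; (S4) $(\alpha\sqsubset\beta\prec\gamma)\vee(\alpha\prec\beta\sqsubset\gamma)\Rightarrow\alpha\prec\gamma$. Quotient: $\alpha\equiv_\sqsubset\beta$ iff $\alpha=\beta$ or ($\alpha\sqsubset\beta\wedge\beta\sqsubset\alpha$); classes $[\alpha]$; $[\alpha]\hat\prec[\beta]$ iff $[\alpha]\neq[\beta]$ and $([\alpha]\times[\beta])\cap\prec\neq\emptyset$; $\hat\sqsubset$ likewise. $R^{\mathrm{cov}}:=\{(x,y):xRy\wedge\neg\exists z(xRz\wedge zRy)\}$. Comtrace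 alphabet: $\theta=(E,sim,ser)$, $E$ finite, $ser\subseteq sim\subseteq E\times E$, $sim$ irreflexive symmetric. Lsos-comtrace over $\theta$: the class of a finite labeled so-structure $(X,\prec,\sqsubset,\lambda)$, $\lambda:X\to E$, such that for all $\alpha\neq\beta$: (LC1) $[\alpha]((\hat\sqsubset)^{\mathrm{cov}}\cap\hat\prec)[\beta]\Rightarrow\lambda[[\alpha]]\times\lambda[[\beta]]\not\subseteq ser$; (LC2) $[\alpha]((\hat\sqsubset)^{\mathrm{cov}}\setminus\hat\prec)[\beta]\Rightarrow\lambda[[\beta]]\times\lambda[[\alpha]]\not\subseteq ser$; (LC3) for nonempty $A,B\subseteq[\alpha]$ with $A\cup B=[\alpha]$, $\lambda[A]\times\lambda[B]\not\subseteq ser$; (LC4) $(\lambda\alpha,\lambda\beta)\notin ser\Rightarrow\alpha\prec\beta\vee\beta\sqsubset\alpha$; (LC5) $(\lambda\alpha,\lambda\beta)\notin sim\Rightarrow\alpha\prec\beta\vee\beta\prec\alpha$. $\mathsf{LCT}(\theta)$ is the set of these. Cd-graph over $\theta$: the class of a finite labeled relational structure $(X,\to,\dashrightarrow,\lambda)$, $\lambda:X\to E$, with $\to,\dashrightarrow$ irreflexive, $(X,\to,\dashrightarrow)^\lozenge$ an so-structure, and for all $\alpha\neq\beta$: (CD1) $(\lambda\alpha,\lambda\beta)\notin sim\Rightarrow\alpha\to\beta\vee\beta\to\alpha$; (CD2) $(\lambda\alpha,\lambda\beta)\notin ser\Rightarrow\alpha\to\beta\vee\beta\dashrightarrow\alpha$;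 (CD3) $\alpha\to\beta\Rightarrow(\lambda\alpha,\lambda\beta)\notin ser$; (CD4) $\alpha\dashrightarrow\beta\Rightarrow(\lambda\beta,\lambda\alpha)\notin ser$. $\mathsf{CDG}(\theta)$ is the set of these; $D^\lozenge$ is an lsos-comtrace for $D\in\mathsf{CDG}(\theta)$. *)

theory Defs
  imports Main
begin

text \<open>A labeled relational structure is given by a carrier X, two relations P Q on X,
  and a labeling l. Structures are considered up to label-preserving isomorphism.\<close>

definition lstruct :: "'a set \<Rightarrow> 'a rel \<Rightarrow> 'a rel \<Rightarrow> bool" where
  "lstruct X P Q \<longleftrightarrow> finite X \<and> P \<subseteq> X \<times> X \<and> Q \<subseteq> X \<times> X"

definition lstruct_iso ::
  "('a \<Rightarrow> 'b) \<Rightarrow> 'a set \<Rightarrow> 'a rel \<Rightarrow> 'a rel \<Rightarrow> ('a \<Rightarrow> 'e)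
     \<Rightarrow> 'b set \<Rightarrow> 'b rel \<Rightarrow> 'b rel \<Rightarrow> ('b \<Rightarrow> 'e) \<Rightarrow> bool" where
  "lstruct_iso f X P Q l Y P' Q' l' \<longleftrightarrow>
     bij_betw f X Y \<and>
     (\<forall>x\<in>X. \<forall>y\<in>X. ((x, y) \<in> P \<longleftrightarrow> (f x, f y) \<in> P') \<and> ((x, y) \<in> Q \<longleftrightarrow> (f x, f y) \<in> Q')) \<and>
     (\<forall>x\<in>X. l' (f x) = l x)"

definition lstruct_isomorphic ::
  "'a set \<Rightarrow> 'a rel \<Rightarrow> 'a rel \<Rightarrow> ('a \<Rightarrow> 'e)
     \<Rightarrow> 'b set \<Rightarrow> 'b rel \<Rightarrow> 'b rel \<Rightarrow> ('b \<Rightarrow> 'e) \<Rightarrow> bool" where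
  "lstruct_isomorphic X P Q l Y P' Q' l' \<longleftrightarrow> (\<exists>f. lstruct_iso f X P Q l Y P' Q' l')"

definition rtcl_on :: "'a set \<Rightarrow> 'a rel \<Rightarrow> 'a rel" where
  "rtcl_on X R = Id_on X \<union> R\<^sup>+"

text \<open>The diamond closure (X,R1,R2)^\<lozenge>; the carrier and labels are unchanged.\<close>
definition dia1 :: "'a set \<Rightarrow> 'a rel \<Rightarrow> 'a rel \<Rightarrow> 'a rel" where
  "dia1 X R1 R2 = rtcl_on X (R1 \<union> R2) O R1 O rtcl_on X (R1 \<union> R2)"

definition dia2 :: "'a set \<Rightarrow> 'a rel \<Rightarrow> 'a rel \<Rightarrow> 'a rel" where
  "dia2 X R1 R2 = rtcl_on X (R1 \<union> R2) - Id_on X"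

definition so_structure :: "'a set \<Rightarrow> 'a rel \<Rightarrow> 'a rel \<Rightarrow> bool" where
  "so_structure X prec sqsub \<longleftrightarrow>
     (\<forall>a\<in>X. (a, a) \<notin> sqsub) \<and>
     (\<forall>a\<in>X. \<forall>b\<in>X. (a, b) \<in> prec \<longrightarrow> (a, b) \<in> sqsub) \<and>
     (\<forall>a\<in>X. \<forall>b\<in>X. \<forall>c\<in>X. (a, b) \<in> sqsub \<and> (b, c) \<in> sqsub \<and> a \<noteq> c \<longrightarrow> (a, c) \<in> sqsub) \<and>
     (\<forall>a\<in>X. \<forall>b\<in>X. \<forall>c\<in>X.
        ((a, b) \<in> sqsub \<and> (b, c) \<in> prec) \<or> ((a, b) \<in> prec \<and> (b, c) \<in> sqsub) \<longrightarrow> (a, c) \<in> prec)"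

definition comtrace_alphabet :: "'e set \<Rightarrow> 'e rel \<Rightarrow> 'e rel \<Rightarrow> bool" where
  "comtrace_alphabet E sim ser \<longleftrightarrow>
     finite E \<and> ser \<subseteq> sim \<and> sim \<subseteq> E \<times> E \<and> irrefl sim \<and> sym sim"

definition cd_graph ::
  "'e set \<Rightarrow> 'e rel \<Rightarrow> 'e rel \<Rightarrow> 'a set \<Rightarrow> 'a rel \<Rightarrow> 'a rel \<Rightarrow> ('a \<Rightarrow> 'e) \<Rightarrow> bool" where
  "cd_graph E sim ser X arr darr l \<longleftrightarrow>
     lstruct X arr darr \<and> l ` X \<subseteq> E \<and>
     (\<forall>a\<in>X. (a, a) \<notin> arr \<and> (a, a) \<notin> darr) \<and>
     so_structure X (dia1 X arr darr) (dia2 X arr darr) \<and>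
     (\<forall>a\<in>X. \<forall>b\<in>X. a \<noteq> b \<longrightarrow>
        ((l a, l b) \<notin> sim \<longrightarrow> (a, b) \<in> arr \<or> (b, a) \<in> arr) \<and>
        ((l a, l b) \<notin> ser \<longrightarrow> (a, b) \<in> arr \<or> (b, a) \<in> darr) \<and>
        ((a, b) \<in> arr \<longrightarrow> (l a, l b) \<notin> ser) \<and>
        ((a, b) \<in> darr \<longrightarrow> (l b, l a) \<notin> ser))"

end

theory Submission
  imports Defs
begin

text \<open>
  The key observation is that a cd-graph can be reconstructed from its diamond closure and its labels alone:
    a \<rightarrow> b   iff  a \<prec> b and (l a, l b) \<notin> ser,
    a \<dashrightarrow> b  iff  a \<sqsubset> b and (l b, l a) \<notin> ser,
  where (\<prec>, \<sqsubset>) is the closure.  The inclusions from left to right hold because the closure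
  contains the generating relations (CD3, CD4); the converse inclusions follow from axiom CD2
  together with the fact that in an so-structure a \<prec> b excludes b \<sqsubset> a.
  Since a label-preserving isomorphism of the closures also respects these label-defined
  filters, it is an isomorphism of the original cd-graphs.
  The argument uses no property of the alphabet beyond the cd-graph axioms.
\<close>

text \<open>Axioms (S1) and (S2) make \<prec> irreflexive as well.\<close>
lemma so_structure_prec_irrefl:
  assumes "so_structure X P Q" and "a \<in> X"
  shows "(a, a) \<notin> P"
  using assms unfolding so_structure_def by blast

text \<open>\<prec> and the converse of \<sqsubset> are disjoint: a \<prec> b \<sqsubset> a would give a \<prec> a by (S4).\<close>
lemma so_structure_prec_not_converse_sqsub:
  assumes so: "so_structure X P Q" and "a \<in> X" "b \<in> X" and "(a, b) \<in> P"
  shows "(b, a) \<notin> Q"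
proof
  assume "(b, a) \<in> Q"
  with assms have "(a, a) \<in> P" unfolding so_structure_def by blast
  with so_structure_prec_irrefl[OF so \<open>a \<in> X\<close>] show False by contradiction
qed

lemma rtcl_on_subset:
  assumes "R \<subseteq> X \<times> X"
  shows "rtcl_on X R \<subseteq> X \<times> X"
  using assms trancl_subset_Sigma unfolding rtcl_on_def by blast

lemma dia1_subset_carrier:
  assumes "R1 \<subseteq> X \<times> X" and "R2 \<subseteq> X \<times> X"
  shows "dia1 X R1 R2 \<subseteq> X \<times> X"
  using rtcl_on_subset[of "R1 \<union> R2" X] assms unfolding dia1_def by blast

lemma dia2_subset_carrier:
  assumes "R1 \<subseteq> X \<times> X" and "R2 \<subseteq> X \<times> X"
  shows "dia2 X R1 R2 \<subseteq> X \<times> X"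
  using rtcl_on_subset[of "R1 \<union> R2" X] assms unfolding dia2_def by blast

lemma generator_in_dia1:
  assumes "R1 \<subseteq> X \<times> X" and "(a, b) \<in> R1"
  shows "(a, b) \<in> dia1 X R1 R2"
proof -
  have "a \<in> X" "b \<in> X" using assms by auto
  then have "(a, a) \<in> rtcl_on X (R1 \<union> R2)" "(b, b) \<in> rtcl_on X (R1 \<union> R2)"
    unfolding rtcl_on_def by auto
  with assms(2) show ?thesis unfolding dia1_def by blast
qed

lemma generator_in_dia2:
  assumes "R2 \<subseteq> X \<times> X" and "(a, b) \<in> R2" and "a \<noteq> b"
  shows "(a, b) \<in> dia2 X R1 R2"
  using assms unfolding dia2_def rtcl_on_def by auto

definition ser_arcs :: "'e rel \<Rightarrow> ('a \<Rightarrow> 'e) \<Rightarrow> 'a rel \<Rightarrow> 'a rel" where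
  "ser_arcs ser l P = {(a, b) \<in> P. (l a, l b) \<notin> ser}"

definition ser_darcs :: "'e rel \<Rightarrow> ('a \<Rightarrow> 'e) \<Rightarrow> 'a rel \<Rightarrow> 'a rel" where
  "ser_darcs ser l Q = {(a, b) \<in> Q. (l b, l a) \<notin> ser}"

lemma cd_graph_carrier:
  assumes "cd_graph E sim ser X A D l"
  shows "A \<subseteq> X \<times> X" and "D \<subseteq> X \<times> X"
  using assms unfolding cd_graph_def lstruct_def by auto

lemma cd_graph_so_structure:
  assumes "cd_graph E sim ser X A D l"
  shows "so_structure X (dia1 X A D) (dia2 X A D)"
  using assms unfolding cd_graph_def by blast

lemma cd_graph_arc_distinct:
  assumes "cd_graph E sim ser X A D l" and "(a, b) \<in> A \<union> D"
  shows "a \<noteq> b"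
proof -
  have "a \<in> X" using assms cd_graph_carrier[OF assms(1)] by blast
  then show ?thesis using assms unfolding cd_graph_def by auto
qed

lemma cd_graph_CD2:
  assumes "cd_graph E sim ser X A D l" and "a \<in> X" "b \<in> X" "a \<noteq> b"
    and "(l a, l b) \<notin> ser"
  shows "(a, b) \<in> A \<or> (b, a) \<in> D"
  using assms unfolding cd_graph_def by simp

lemma cd_graph_CD3:
  assumes G: "cd_graph E sim ser X A D l" and "(a, b) \<in> A"
  shows "(l a, l b) \<notin> ser"
proof -
  have "a \<in> X" "b \<in> X" "a \<noteq> b"
    using assms cd_graph_carrier[OF G] cd_graph_arc_distinct[OF G] by auto
  with assms show ?thesis unfolding cd_graph_def by simp
qed

lemma cd_graph_CD4:
  assumes G: "cd_graph E sim ser X A D l" and "(a, b) \<in> D"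
  shows "(l b, l a) \<notin> ser"
proof -
  have "a \<in> X" "b \<in> X" "a \<noteq> b"
    using assms cd_graph_carrier[OF G] cd_graph_arc_distinct[OF G] by auto
  with assms show ?thesis unfolding cd_graph_def by simp
qed

lemma cd_graph_arcs_from_closure:
  assumes G: "cd_graph E sim ser X A D l"
  shows "A = ser_arcs ser l (dia1 X A D)"
proof (intro equalityI subsetI)
  fix p assume "p \<in> A"
  then obtain a b where p: "p = (a, b)" and ab: "(a, b) \<in> A" by (cases p) auto
  have "(a, b) \<in> dia1 X A D" by (rule generator_in_dia1[OF cd_graph_carrier(1)[OF G] ab])
  with cd_graph_CD3[OF G ab] show "p \<in> ser_arcs ser l (dia1 X A D)"
    unfolding p ser_arcs_def by simp
next
  note carrier = cd_graph_carrier[OF G] and so = cd_graph_so_structure[OF G]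
  fix p assume "p \<in> ser_arcs ser l (dia1 X A D)"
  then obtain a b where p: "p = (a, b)" and prec: "(a, b) \<in> dia1 X A D"
    and nser: "(l a, l b) \<notin> ser" unfolding ser_arcs_def by blast
  have X: "a \<in> X" "b \<in> X" using prec dia1_subset_carrier[OF carrier] by auto
  have "a \<noteq> b" using so_structure_prec_irrefl[OF so] prec X by blast
  then have "(a, b) \<in> A \<or> (b, a) \<in> D" using cd_graph_CD2[OF G X _ nser] by blast
  moreover have "(b, a) \<notin> D"
    using generator_in_dia2[OF carrier(2)] so_structure_prec_not_converse_sqsub[OF so X prec]
      \<open>a \<noteq> b\<close> by blast
  ultimately show "p \<in> A" unfolding p by blast
qed

lemma cd_graph_darcs_from_closure:
  assumes G: "cd_graph E sim ser X A D l"
  shows "D = ser_darcs ser l (dia2 X A D)"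
proof (intro equalityI subsetI)
  fix p assume "p \<in> D"
  then obtain a b where p: "p = (a, b)" and ab: "(a, b) \<in> D" by (cases p) auto
  have "(a, b) \<in> dia2 X A D"
    using generator_in_dia2[OF cd_graph_carrier(2)[OF G] ab] cd_graph_arc_distinct[OF G] ab
    by blast
  with cd_graph_CD4[OF G ab] show "p \<in> ser_darcs ser l (dia2 X A D)"
    unfolding p ser_darcs_def by simp
next
  note carrier = cd_graph_carrier[OF G] and so = cd_graph_so_structure[OF G]
  fix p assume "p \<in> ser_darcs ser l (dia2 X A D)"
  then obtain a b where p: "p = (a, b)" and sqsub: "(a, b) \<in> dia2 X A D"
    and nser: "(l b, l a) \<notin> ser" unfolding ser_darcs_def by blast
  have X: "a \<in> X" "b \<in> X" using sqsub dia2_subset_carrier[OF carrier] by auto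
  have "b \<noteq> a" using sqsub X unfolding dia2_def by blast
  then have "(b, a) \<in> A \<or> (a, b) \<in> D" using cd_graph_CD2[OF G X(2,1) _ nser] by blast
  moreover have "(b, a) \<notin> A"
    using generator_in_dia1[OF carrier(1)] so_structure_prec_not_converse_sqsub[OF so X(2,1)]
      sqsub by blast
  ultimately show "p \<in> D" unfolding p by blast
qed

lemma lstruct_iso_ser_filter:
  assumes "lstruct_iso f X P Q l Y P' Q' l'"
  shows "lstruct_iso f X (ser_arcs ser l P) (ser_darcs ser l Q) l
                       Y (ser_arcs ser l' P') (ser_darcs ser l' Q') l'"
  using assms unfolding lstruct_iso_def ser_arcs_def ser_darcs_def by auto

theorem mainTheorem11:
  fixes E :: "'e set" and sim ser :: "'e rel"
    and X1 :: "'a set" and A1 D1 :: "'a rel" and l1 :: "'a \<Rightarrow> 'e"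
    and X2 :: "'b set" and A2 D2 :: "'b rel" and l2 :: "'b \<Rightarrow> 'e"
  assumes "comtrace_alphabet E sim ser"
    and "cd_graph E sim ser X1 A1 D1 l1"
    and "cd_graph E sim ser X2 A2 D2 l2"
    and "lstruct_isomorphic X1 (dia1 X1 A1 D1) (dia2 X1 A1 D1) l1
                            X2 (dia1 X2 A2 D2) (dia2 X2 A2 D2) l2"
  shows "lstruct_isomorphic X1 A1 D1 l1 X2 A2 D2 l2"
proof -
  obtain f where "lstruct_iso f X1 (dia1 X1 A1 D1) (dia2 X1 A1 D1) l1
                                X2 (dia1 X2 A2 D2) (dia2 X2 A2 D2) l2"
    using assms(4) unfolding lstruct_isomorphic_def by blast
  then have "lstruct_iso f X1 (ser_arcs ser l1 (dia1 X1 A1 D1)) (ser_darcs ser l1 (dia2 X1 A1 D1)) l1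
                           X2 (ser_arcs ser l2 (dia1 X2 A2 D2)) (ser_darcs ser l2 (dia2 X2 A2 D2)) l2"
    by (rule lstruct_iso_ser_filter)
  then have "lstruct_iso f X1 A1 D1 l1 X2 A2 D2 l2"
    using cd_graph_arcs_from_closure[OF assms(2)] cd_graph_darcs_from_closure[OF assms(2)]
      cd_graph_arcs_from_closure[OF assms(3)] cd_graph_darcs_from_closure[OF assms(3)]
    by simp
  then show ?thesis unfolding lstruct_isomorphic_def by blast
qed

end
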